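(* Let $n\ge1$ and let $A=A[1]\cdots A[n]$ be a sequence of $n$ elements. Let $\#_1,\ldots,\#_n$ be pairwise distinct symbols, each different from every $A[j]$, and let $T=A\,\#_1\#_2\cdots\#_n$, a string of length $2n$. Then $S_T(k)/k\le n$ for all $k\ge2$, and $\delta(T)=S_T(1)=n+|\{A[1],\ldots,A[n]\}|$. In particular, the elements of $A$ are pairwise distinct if and only if $\delta(T)=2n$; equivalently, $A$ has a repeated element if and only if $\delta(T)<2n$.
   Context: For a string $T$, $S_T(k)$ is the number of distinct length-$k$ substrings of $T$, and $\delta(T)=\sup\{S_T(k)/k: k\ge1\}$. *)

theory Defs
  imports Complex_Main
begin

definition substrings_len :: "'a list \<Rightarrow> nat \<Rightarrow> 'a list set" where
  "substrings_len T k = {take k (drop i T) | i. i + k \<le> length T}"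

definition S :: "'a list \<Rightarrow> nat \<Rightarrow> nat" where
  "S T k = card (substrings_len T k)"

definition delta :: "'a list \<Rightarrow> real" where
  "delta T = (SUP k\<in>{1..}. real (S T k) / real k)"

end

theory Submission
  imports Defs
begin

text \<open>A string of length \<open>L\<close> has at most \<open>L + 1 - k\<close> factors of length \<open>k\<close>, so for \<open>k \<ge> 2\<close>
  the ratio \<open>S_T(k)/k\<close> is at most \<open>L/2\<close>; for \<open>T = A #\<^sub>1\<cdots>#\<^sub>n\<close> this is \<open>n\<close>, while
  \<open>S_T(1)\<close> counts the letters of \<open>T\<close>, i.e. \<open>n + |{A[1],\<dots>,A[n]}| \<ge> n + 1\<close>. Hence the supremum
  \<open>\<delta>(T)\<close> is attained at \<open>k = 1\<close>, and it equals \<open>2n\<close> exactly when \<open>A\<close> has \<open>n\<close> distinct letters.\<close>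

lemma substrings_len_eq_image:
  "substrings_len T k = (\<lambda>i. take k (drop i T)) ` {i. i + k \<le> length T}"
  unfolding substrings_len_def by auto

lemma S_le_length: "S T k \<le> length T + 1 - k"
proof -
  have "finite {i. i + k \<le> length T}"
    by (rule finite_subset[of _ "{..length T}"]) auto
  then have "S T k \<le> card {i. i + k \<le> length T}"
    unfolding S_def substrings_len_eq_image by (rule card_image_le)
  also have "\<dots> \<le> card {..<length T + 1 - k}"
    by (rule card_mono) auto
  finally show ?thesis by simp
qed

lemma S_one_eq_card_set: "S T 1 = card (set T)"
proof -
  have "substrings_len T 1 = (\<lambda>x. [x]) ` set T"
  proof -
    have "take 1 (drop i T) = [T ! i]" if "i < length T" for i
      using that by (simp add: take_Suc_conv_app_nth)
    then have "substrings_len T 1 = (\<lambda>i. [T ! i]) ` {..<length T}"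
      unfolding substrings_len_eq_image by (auto simp: Suc_le_eq)
    also have "\<dots> = (\<lambda>x. [x]) ` set T"
      by (auto simp: in_set_conv_nth image_iff)
    finally show ?thesis .
  qed
  moreover have "inj_on (\<lambda>x. [x]) (set T)" by (auto simp: inj_on_def)
  ultimately show ?thesis unfolding S_def by (simp add: card_image)
qed

lemma S_div_le_half_length:
  assumes "k \<ge> 2"
  shows "real (S T k) / real k \<le> real (length T) / 2"
proof -
  have "2 * S T k \<le> 2 * length T" using S_le_length[of T k] assms by simp
  also have "\<dots> \<le> length T * k" using assms by simp
  finally have "2 * S T k \<le> length T * k" .
  then have "real (S T k) * 2 \<le> real (length T) * real k"
    by (metis mult.commute of_nat_le_iff of_nat_mult of_nat_numeral)
  with assms show ?thesis by (simp add: field_simps)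
qed

lemma delta_eq_S_one:
  assumes "\<And>k. k \<ge> 2 \<Longrightarrow> real (S T k) / real k \<le> real (S T 1)"
  shows "delta T = real (S T 1)"
  unfolding delta_def
proof (rule cSup_eq_maximum)
  show "real (S T 1) \<in> (\<lambda>k. real (S T k) / real k) ` {1..}" by force
next
  fix x assume "x \<in> (\<lambda>k. real (S T k) / real k) ` {1..}"
  then obtain k where "k \<ge> 1" "x = real (S T k) / real k" by auto
  then show "x \<le> real (S T 1)"
    using assms[of k] by (cases "k = 1") auto
qed

theorem mainTheorem4:
  fixes A hs :: "'a list" and n :: nat and T :: "'a list"
  assumes "n \<ge> 1"
    and "length A = n"
    and "length hs = n"
    and "distinct hs"
    and "set hs \<inter> set A = {}"
    and "T = A @ hs"
  shows "(\<forall>k\<ge>2. real (S T k) / real k \<le> real n)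
    \<and> delta T = real (S T 1)
    \<and> S T 1 = n + card (set A)
    \<and> (distinct A \<longleftrightarrow> delta T = 2 * real n)
    \<and> (\<not> distinct A \<longleftrightarrow> delta T < 2 * real n)"
proof -
  have bound: "real (S T k) / real k \<le> real n" if "k \<ge> 2" for k
    using S_div_le_half_length[OF that, of T] assms(2,3,6) by simp
  have S1: "S T 1 = n + card (set A)"
    using assms(3-6) S_one_eq_card_set[of T] distinct_card[of hs]
    by (simp add: card_Un_disjoint Int_commute)
  have delta: "delta T = real (S T 1)"
    using bound S1 by (intro delta_eq_S_one) (simp add: order_trans[OF bound])
  have "card (set A) \<le> n" using assms(2) card_length by metis
  moreover have "distinct A \<longleftrightarrow> card (set A) = n"
    using assms(2) card_distinct distinct_card by metis
  ultimately show ?thesis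
    using bound delta S1 by auto
qed

end
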